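(* Let $(\lambda,\mu,\mu')$ be an admissible triplet and let $\mu^*,\mu'^*$ be the associated weights. Then $\langle\lambda+\mu'^*,\alpha_j^\vee\rangle\ge0$ for every $j\in\{1,\dots,n-1\}$, i.e. $\lambda_j-\lambda_{j+1}+\mu'^*_j-\mu'^*_{j+1}\ge0$.
   Context: Type $D_n$ weights are $(\lambda_1,\dots,\lambda_n)$; $\langle\lambda,\alpha_j^\vee\rangle=\lambda_j-\lambda_{j+1}$ for $j<n$ and $\langle\lambda,\alpha_n^\vee\rangle=\lambda_{n-1}+\lambda_n$; $P_+=\{\lambda_j\in\frac12\mathbb Z,\lambda_j-\lambda_k\in\mathbb Z,\lambda_1\ge\dots\ge\lambda_n,\lambda_{n-1}+\lambda_n\ge0\}$; $P[S]=\{(\pm\frac12,\dots,\pm\frac12)\}$. For $k\ge0$, $\Delta^k$ is the set of sums $\mu_1+\dots+\mu_k$ over tuples $(\mu_1,\dots,\mu_k)\in P[S]^k$ all of whose partial sums lie in $P_+$ ($\Delta^0=\{0\}$). A triplet $(\lambda,\mu,\mu')$ is admissible if $\lambda\in\Delta^k$ for some $k\ge0$, $\mu,\mu'\in P[S]$, and $\lambda+\mu,\ \lambda+\mu+\mu'\in P_+$. A free interval of the triplet is a subset $\mathrm{Fr}\subset\{1,\dots,n\}$, maximal with respect to inclusion, such that $\lambda_j$ is constant on $\mathrm{Fr}$ and $\mu_j\mu'_j<0$ for all $j\in\mathrm{Fr}$. The weights $\mu^*,\mu'^*\in P[S]$ are defined as follows: outside all free intervals they agree with $\mu,\mu'$;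 on each free interval $\mathrm{Fr}$, with $b=|\{j\in\mathrm{Fr}:\mu'_j=+\frac12\}|$, $\mu'^*_j=+\frac12$ for the $b$ smallest elements $j$ of $\mathrm{Fr}$ and $\mu'^*_j=-\frac12$ for the remaining elements of $\mathrm{Fr}$, and $\mu^*_j=-\mu'^*_j$ for $j\in\mathrm{Fr}$. (Equivalently, $b_{\mu'^*}$, $b_{\mu^*}$ are obtained from $b_{\mu'}$, $b_\mu$ in the spinor crystal by moving, within each free interval, the $+$'s of $\mu'$ (resp. the $-$'s of $\mu$) leftward across the other signs by crystal operators.) *)

theory Defs
  imports Main "HOL.Real"
begin

text \<open>Weights of type D_n are modelled as functions nat => real, with
  coordinates indexed by 1..n and (for spin weights / their sums) zero elsewhere.\<close>

definition dominant :: "nat \<Rightarrow> (nat \<Rightarrow> real) \<Rightarrow> bool" where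
  "dominant n l \<longleftrightarrow>
     (\<forall>j\<in>{1..n}. 2 * l j \<in> \<int>) \<and>
     (\<forall>j\<in>{1..n}. \<forall>k\<in>{1..n}. l j - l k \<in> \<int>) \<and>
     (\<forall>j\<in>{1..<n}. l j \<ge> l (j+1)) \<and>
     l (n-1) + l n \<ge> 0"

definition spin_weight :: "nat \<Rightarrow> (nat \<Rightarrow> real) \<Rightarrow> bool" where
  "spin_weight n m \<longleftrightarrow>
     (\<forall>j\<in>{1..n}. m j = 1/2 \<or> m j = -1/2) \<and> (\<forall>j. j \<notin> {1..n} \<longrightarrow> m j = 0)"

definition Delta :: "nat \<Rightarrow> nat \<Rightarrow> (nat \<Rightarrow> real) set" where
  "Delta n k = {l. \<exists>ms :: nat \<Rightarrow> nat \<Rightarrow> real.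
      (\<forall>i<k. spin_weight n (ms i)) \<and>
      (\<forall>m\<in>{1..k}. dominant n (\<lambda>j. \<Sum>i<m. ms i j)) \<and>
      l = (\<lambda>j. \<Sum>i<k. ms i j)}"

definition admissible :: "nat \<Rightarrow> (nat \<Rightarrow> real) \<Rightarrow> (nat \<Rightarrow> real) \<Rightarrow> (nat \<Rightarrow> real) \<Rightarrow> bool" where
  "admissible n l m m' \<longleftrightarrow>
     (\<exists>k. l \<in> Delta n k) \<and> spin_weight n m \<and> spin_weight n m' \<and>
     dominant n (\<lambda>j. l j + m j) \<and> dominant n (\<lambda>j. l j + m j + m' j)"

definition free_cond :: "(nat \<Rightarrow> real) \<Rightarrow> (nat \<Rightarrow> real) \<Rightarrow> (nat \<Rightarrow> real) \<Rightarrow> nat set \<Rightarrow> bool" where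
  "free_cond l m m' F \<longleftrightarrow> (\<forall>i\<in>F. \<forall>j\<in>F. l i = l j) \<and> (\<forall>j\<in>F. m j * m' j < 0)"

definition free_interval :: "nat \<Rightarrow> (nat \<Rightarrow> real) \<Rightarrow> (nat \<Rightarrow> real) \<Rightarrow> (nat \<Rightarrow> real) \<Rightarrow> nat set \<Rightarrow> bool" where
  "free_interval n l m m' F \<longleftrightarrow>
     F \<subseteq> {1..n} \<and> free_cond l m m' F \<and>
     (\<forall>G. G \<subseteq> {1..n} \<and> free_cond l m m' G \<and> F \<subseteq> G \<longrightarrow> G = F)"

definition mu'_star :: "nat \<Rightarrow> (nat \<Rightarrow> real) \<Rightarrow> (nat \<Rightarrow> real) \<Rightarrow> (nat \<Rightarrow> real) \<Rightarrow> nat \<Rightarrow> real" where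
  "mu'_star n l m m' j =
     (if \<exists>F. free_interval n l m m' F \<and> j \<in> F then
        (let F = (SOME F. free_interval n l m m' F \<and> j \<in> F);
             b = card {i\<in>F. m' i = 1/2}
         in if card {i\<in>F. i < j} < b then 1/2 else -1/2)
      else m' j)"

definition mu_star :: "nat \<Rightarrow> (nat \<Rightarrow> real) \<Rightarrow> (nat \<Rightarrow> real) \<Rightarrow> (nat \<Rightarrow> real) \<Rightarrow> nat \<Rightarrow> real" where
  "mu_star n l m m' j =
     (if \<exists>F. free_interval n l m m' F \<and> j \<in> F then - mu'_star n l m m' j else m j)"

end

theory Submission
  imports Defs
begin

text \<open>Maximality makes the free interval through a free index j the set of all free indices
  on the level of \<open>\<lambda>\<^sub>j\<close>, which gives \<open>\<mu>'\<^sup>*\<close> explicitly. Since \<open>\<lambda>\<close> is dominant, \<open>\<lambda>\<^sub>j - \<lambda>\<^sub>j\<^sub>+\<^sub>1\<close>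
  is a nonnegative integer; if it is positive it absorbs \<open>\<mu>'\<^sup>*\<^sub>j - \<mu>'\<^sup>*\<^sub>j\<^sub>+\<^sub>1 \<ge> -1\<close>. If it is
  zero, dominance of \<open>\<lambda> + \<mu>\<close> and \<open>\<lambda> + \<mu> + \<mu>'\<close> at j fixes the sign of \<open>\<mu>'\<close> next to a free
  index, and inside a free interval the \<open>+\<close>'s of \<open>\<mu>'\<^sup>*\<close> come first; either way
  \<open>\<mu>'\<^sup>*\<^sub>j \<ge> \<mu>'\<^sup>*\<^sub>j\<^sub>+\<^sub>1\<close>.\<close>

definition free_block :: "nat \<Rightarrow> (nat \<Rightarrow> real) \<Rightarrow> (nat \<Rightarrow> real) \<Rightarrow> (nat \<Rightarrow> real) \<Rightarrow> real \<Rightarrow> nat set"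
  where "free_block n l m m' c = {i \<in> {1..n}. l i = c \<and> m i * m' i < 0}"

lemma finite_free_block: "finite (free_block n l m m' c)"
  by (simp add: free_block_def)

lemma free_interval_free_block:
  assumes "j \<in> free_block n l m m' c"
  shows "free_interval n l m m' (free_block n l m m' c)"
  unfolding free_interval_def
proof (intro conjI allI impI)
  show "free_block n l m m' c \<subseteq> {1..n}" "free_cond l m m' (free_block n l m m' c)"
    by (auto simp: free_block_def free_cond_def)
  fix G assume G: "G \<subseteq> {1..n} \<and> free_cond l m m' G \<and> free_block n l m m' c \<subseteq> G"
  have "j \<in> G" "l j = c" using assms G by (auto simp: free_block_def)
  have "G \<subseteq> free_block n l m m' c"
  proof
    fix i assume "i \<in> G"
    with G \<open>j \<in> G\<close> \<open>l j = c\<close> show "i \<in> free_block n l m m' c"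
      unfolding free_cond_def free_block_def by blast
  qed
  then show "G = free_block n l m m' c" using G by blast
qed

lemma free_interval_mem_iff:
  "free_interval n l m m' F \<and> j \<in> F \<longleftrightarrow>
     j \<in> free_block n l m m' (l j) \<and> F = free_block n l m m' (l j)"
proof
  assume F: "free_interval n l m m' F \<and> j \<in> F"
  then have F_range: "F \<subseteq> {1..n}" and F_free: "free_cond l m m' F"
    and F_max: "\<forall>G. G \<subseteq> {1..n} \<and> free_cond l m m' G \<and> F \<subseteq> G \<longrightarrow> G = F"
    unfolding free_interval_def by blast+
  have sub: "F \<subseteq> free_block n l m m' (l j)"
  proof
    fix i assume "i \<in> F"
    with F F_range F_free show "i \<in> free_block n l m m' (l j)"
      unfolding free_cond_def free_block_def by blast
  qed
  have "free_block n l m m' (l j) \<subseteq> {1..n}" "free_cond l m m' (free_block n l m m' (l j))"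
    unfolding free_block_def free_cond_def by auto
  with F_max sub have "free_block n l m m' (l j) = F" by blast
  with F show "j \<in> free_block n l m m' (l j) \<and> F = free_block n l m m' (l j)" by simp
next
  assume "j \<in> free_block n l m m' (l j) \<and> F = free_block n l m m' (l j)"
  then show "free_interval n l m m' F \<and> j \<in> F" using free_interval_free_block by blast
qed

lemma mu'_star_eq:
  "mu'_star n l m m' j =
     (let F = free_block n l m m' (l j)
      in if j \<in> F then (if card {i\<in>F. i < j} < card {i\<in>F. m' i = 1/2} then 1/2 else -1/2)
         else m' j)"
proof (cases "j \<in> free_block n l m m' (l j)")
  case True
  then have "\<exists>F. free_interval n l m m' F \<and> j \<in> F"
    using free_interval_mem_iff by blast
  moreover have "(SOME F. free_interval n l m m' F \<and> j \<in> F) = free_block n l m m' (l j)"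
  proof (rule some_equality)
    show "free_interval n l m m' (free_block n l m m' (l j)) \<and> j \<in> free_block n l m m' (l j)"
      using True free_interval_mem_iff by blast
  qed (use free_interval_mem_iff in blast)
  ultimately show ?thesis
    unfolding mu'_star_def using True by (simp only: Let_def if_True)
next
  case False
  then have "\<nexists>F. free_interval n l m m' F \<and> j \<in> F"
    using free_interval_mem_iff by blast
  then show ?thesis
    unfolding mu'_star_def using False by (simp only: Let_def if_False)
qed

lemma mu'_star_spin:
  assumes "spin_weight n m'" and "i \<in> {1..n}"
  shows "mu'_star n l m m' i = 1/2 \<or> mu'_star n l m m' i = -1/2"
  using assms unfolding mu'_star_eq spin_weight_def by (auto simp: Let_def)

lemma Delta_dominant:
  assumes "l \<in> Delta n k"
  shows "dominant n l"
proof (cases "k = 0")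
  case True
  with assms show ?thesis by (simp add: Delta_def dominant_def)
next
  case False
  with assms show ?thesis by (auto simp: Delta_def)
qed

lemma dominant_antitone:
  assumes "dominant n l" and "j \<in> {1..<n}"
  shows "l (j+1) \<le> l j"
  using assms unfolding dominant_def by blast

lemma dominant_gap_cases:
  assumes "dominant n l" and "j \<in> {1..<n}"
  shows "l (j+1) = l j \<or> l (j+1) + 1 \<le> l j"
proof -
  from assms have "l j - l (j+1) \<in> \<int>" unfolding dominant_def by auto
  moreover have "l (j+1) \<le> l j" using assms by (rule dominant_antitone)
  ultimately obtain z :: int where "l j - l (j+1) = of_int z" "z \<ge> 0"
    by (metis Ints_cases of_int_0_le_iff diff_ge_0_iff_ge)
  then have "z = 0 \<or> z \<ge> 1" by linarith
  with \<open>l j - l (j+1) = of_int z\<close> show ?thesis by auto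
qed

text \<open>Here \<open>a, a'\<close> are the values of \<open>\<mu>, \<mu>'\<close> at j and \<open>b, b'\<close> those at j+1.\<close>

lemma spin_signs_step:
  fixes a a' b b' :: real
  assumes "a = 1/2 \<or> a = -1/2" "a' = 1/2 \<or> a' = -1/2"
    and "b = 1/2 \<or> b = -1/2" "b' = 1/2 \<or> b' = -1/2"
    and "b \<le> a" "b + b' \<le> a + a'"
  shows "a * a' < 0 \<Longrightarrow> b * b' \<ge> 0 \<Longrightarrow> b' = -1/2"
    and "a * a' \<ge> 0 \<Longrightarrow> b * b' < 0 \<Longrightarrow> a' = 1/2"
    and "a * a' \<ge> 0 \<Longrightarrow> b * b' \<ge> 0 \<Longrightarrow> b' \<le> a'"
  using assms by (elim disjE; simp)+

lemma mu'_star_antitone_on_level: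
  assumes "spin_weight n m" "spin_weight n m'" and j: "j \<in> {1..<n}"
    and level: "l (j+1) = l j"
    and "m (j+1) \<le> m j" "m (j+1) + m' (j+1) \<le> m j + m' j"
  shows "mu'_star n l m m' (j+1) \<le> mu'_star n l m m' j"
proof -
  let ?F = "free_block n l m m' (l j)"
  let ?s = "mu'_star n l m m'"
  have j_range: "j \<in> {1..n}" "j+1 \<in> {1..n}" using j by auto
  then have free_j: "j \<in> ?F \<longleftrightarrow> m j * m' j < 0"
    and free_Suc_j: "j+1 \<in> ?F \<longleftrightarrow> m (j+1) * m' (j+1) < 0"
    using level by (simp_all add: free_block_def)
  have spins: "m i = 1/2 \<or> m i = -1/2" "m' i = 1/2 \<or> m' i = -1/2" if "i \<in> {1..n}" for i
    using assms(1,2) that unfolding spin_weight_def by auto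
  note signs = spin_signs_step[OF spins(1,2)[OF j_range(1)] spins(1,2)[OF j_range(2)] assms(5,6)]
  have s_j: "?s j = (if j \<in> ?F then
      (if card {i\<in>?F. i < j} < card {i\<in>?F. m' i = 1/2} then 1/2 else -1/2) else m' j)"
    by (simp add: mu'_star_eq Let_def)
  have s_Suc_j: "?s (j+1) = (if j+1 \<in> ?F then
      (if card {i\<in>?F. i < j+1} < card {i\<in>?F. m' i = 1/2} then 1/2 else -1/2) else m' (j+1))"
    using level by (simp add: mu'_star_eq Let_def)
  consider (both) "j \<in> ?F" "j+1 \<in> ?F" | (left) "j \<in> ?F" "j+1 \<notin> ?F"
    | (right) "j \<notin> ?F" "j+1 \<in> ?F" | (neither) "j \<notin> ?F" "j+1 \<notin> ?F"
    by blast
  then show ?thesis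
  proof cases
    case both
    have "card {i\<in>?F. i < j} \<le> card {i\<in>?F. i < j+1}"
      by (rule card_mono) (auto simp: finite_free_block)
    with both show ?thesis unfolding s_j s_Suc_j by auto
  next
    case left
    with free_j free_Suc_j have "m' (j+1) = -1/2" by (intro signs(1)) (simp_all add: not_less)
    with left have "?s (j+1) = -1/2" unfolding s_Suc_j by simp
    with mu'_star_spin[OF assms(2) j_range(1), of l m] show ?thesis by auto
  next
    case right
    with free_j free_Suc_j have "m' j = 1/2" by (intro signs(2)) (simp_all add: not_less)
    with right have "?s j = 1/2" unfolding s_j by simp
    with mu'_star_spin[OF assms(2) j_range(2), of l m] show ?thesis by auto
  next
    case neither
    with free_j free_Suc_j have "m' (j+1) \<le> m' j" by (intro signs(3)) (simp_all add: not_less)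
    with neither show ?thesis unfolding s_j s_Suc_j by simp
  qed
qed

theorem proposition6p4:
  fixes n :: nat and l m m' :: "nat \<Rightarrow> real"
  assumes "n \<ge> 2"
    and "admissible n l m m'"
  shows "\<forall>j\<in>{1..<n}. l j - l (j+1) + mu'_star n l m m' j - mu'_star n l m m' (j+1) \<ge> 0"
proof
  fix j assume j: "j \<in> {1..<n}"
  obtain k where "l \<in> Delta n k" and spin: "spin_weight n m" "spin_weight n m'"
    and dom: "dominant n (\<lambda>j. l j + m j)" "dominant n (\<lambda>j. l j + m j + m' j)"
    using assms(2) unfolding admissible_def by blast
  then have "dominant n l" by (simp add: Delta_dominant)
  from dominant_gap_cases[OF this j]
  show "l j - l (j+1) + mu'_star n l m m' j - mu'_star n l m m' (j+1) \<ge> 0"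
  proof
    assume level: "l (j+1) = l j"
    with dominant_antitone[OF dom(1) j] dominant_antitone[OF dom(2) j]
    have "m (j+1) \<le> m j" "m (j+1) + m' (j+1) \<le> m j + m' j" by simp_all
    with mu'_star_antitone_on_level[OF spin j level] level show ?thesis by simp
  next
    assume gap: "l (j+1) + 1 \<le> l j"
    have "j \<in> {1..n}" "j+1 \<in> {1..n}" using j by auto
    then have "mu'_star n l m m' (j+1) - mu'_star n l m m' j \<le> 1"
      using mu'_star_spin[OF spin(2), of j l m] mu'_star_spin[OF spin(2), of "j+1" l m] by auto
    with gap show ?thesis by linarith
  qed
qed

end
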